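(* The class $\mathcal{S}^*_{nc}$ satisfies: (1) $\mathcal{S}^*_{nc}\subset\mathcal{S}^*$; (2) $\mathcal{S}^*_{nc}\not\subset\mathcal{S}^*(\alpha)$ for every $\alpha\in(0,1)$; (3) $\mathcal{S}^*_{nc}\subset\mu(\beta)$ whenever $\beta\ge 2\sec 1$.
   Context: $\mathbb{D}$ is the open unit disk. $\mathcal{A}$ is the class of analytic $f$ on $\mathbb{D}$ with $f(0)=0$, $f'(0)=1$. For analytic $f,g$ on $\mathbb{D}$, $f\prec g$ means $f=g\circ\omega$ for some analytic $\omega:\mathbb{D}\to\mathbb{D}$ with $\omega(0)=0$. $\mathcal{S}^*_{nc}=\{f\in\mathcal{A}: zf'(z)/f(z)\prec (1+z)/\cos z\}$. $\mathcal{S}^*=\{f\in\mathcal{A}:\operatorname{Re}(zf'(z)/f(z))>0,\ z\in\mathbb{D}\}$; for $0\le\alpha<1$, $\mathcal{S}^*(\alpha)=\{f\in\mathcal{A}:\operatorname{Re}(zf'(z)/f(z))>\alpha,\ z\in\mathbb{D}\}$; for $\beta>1$, $\mu(\beta)=\{f\in\mathcal{A}:\operatorname{Re}(zf'(z)/f(z))<\beta,\ z\in\mathbb{D}\}$. *)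

theory Defs
  imports "HOL-Analysis.Analysis"
begin

definition unit_disk :: "complex set" where
  "unit_disk = ball 0 1"

definition classA :: "(complex \<Rightarrow> complex) set" where
  "classA = {f. f holomorphic_on unit_disk \<and> f 0 = 0 \<and> deriv f 0 = 1}"

definition subordinate :: "(complex \<Rightarrow> complex) \<Rightarrow> (complex \<Rightarrow> complex) \<Rightarrow> bool" where
  "subordinate f g \<longleftrightarrow> f holomorphic_on unit_disk \<and> g holomorphic_on unit_disk \<and>
     (\<exists>\<omega>. \<omega> holomorphic_on unit_disk \<and> \<omega> ` unit_disk \<subseteq> unit_disk \<and> \<omega> 0 = 0 \<and>
          (\<forall>z\<in>unit_disk. f z = g (\<omega> z)))"

text \<open>z f'(z)/f(z), with its removable value 1 at z = 0 (since f(0)=0, f'(0)=1).\<close>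
definition zfq :: "(complex \<Rightarrow> complex) \<Rightarrow> complex \<Rightarrow> complex" where
  "zfq f z = (if z = 0 then 1 else z * deriv f z / f z)"

definition S_nc :: "(complex \<Rightarrow> complex) set" where
  "S_nc = {f \<in> classA. subordinate (zfq f) (\<lambda>z. (1 + z) / cos z)}"

definition S_star :: "(complex \<Rightarrow> complex) set" where
  "S_star = {f \<in> classA. \<forall>z\<in>unit_disk. Re (zfq f z) > 0}"

definition S_star_alpha :: "real \<Rightarrow> (complex \<Rightarrow> complex) set" where
  "S_star_alpha \<alpha> = {f \<in> classA. \<forall>z\<in>unit_disk. Re (zfq f z) > \<alpha>}"

definition mu_class :: "real \<Rightarrow> (complex \<Rightarrow> complex) set" where
  "mu_class \<beta> = {f \<in> classA. \<forall>z\<in>unit_disk. Re (zfq f z) < \<beta>}"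

end

theory Submission imports Defs "HOL-Complex_Analysis.Complex_Analysis" begin

text \<open>
  Write \<open>\<phi>(w) = (1 + w) / cos w\<close>. Since \<open>z f'/f\<close> is subordinate to \<open>\<phi>\<close>, its values on the disk
  are values of \<open>\<phi>\<close> on the disk, so (1) and (3) reduce to bounds on \<open>Re \<phi>\<close> over the disk.
  With \<open>w = x + iy\<close>, the sign of \<open>Re \<phi>(w)\<close> is that of \<open>(1 + x) cos x cosh y - y sin x sinh y\<close>,
  which is positive because \<open>y sinh y \<le> y\<^sup>2 cosh y < (1 - x\<^sup>2) cosh y\<close>, \<open>sin x \<le> x\<close> and
  \<open>x (1 - x) < 1 - x\<^sup>2/2 \<le> cos x\<close>; the upper bound follows from \<open>|1 + w| < 2\<close> and
  \<open>|cos w| \<ge> Re (cos w) \<ge> cos 1\<close>. For (2), \<open>\<phi>\<close> itself is \<open>z f'/f\<close> for some \<open>f\<close> in the class,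
  and \<open>\<phi>(-r) = (1 - r) / cos r\<close> tends to \<open>0\<close> as \<open>r \<rightarrow> 1\<close>.
\<close>

lemma sinh_le_mult_cosh:
  fixes t :: real
  assumes "0 \<le> t"
  shows "sinh t \<le> t * cosh t"
proof -
  let ?h = "\<lambda>t::real. t * cosh t - sinh t"
  have "(?h has_real_derivative (t * sinh t)) (at t)" for t :: real
    by (auto intro!: derivative_eq_intros)
  then have "?h 0 \<le> ?h t"
    by (intro DERIV_nonneg_imp_nondecreasing[OF assms]) (auto intro!: exI mult_nonneg_nonneg)
  then show ?thesis by simp
qed

lemma mult_sinh_le_square_cosh: "y * sinh y \<le> y\<^sup>2 * cosh (y::real)"
proof -
  have "\<bar>y\<bar> * sinh \<bar>y\<bar> \<le> \<bar>y\<bar> * (\<bar>y\<bar> * cosh \<bar>y\<bar>)"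
    by (intro mult_left_mono sinh_le_mult_cosh) auto
  then show ?thesis
    by (cases "y \<ge> 0") (auto simp: power2_eq_square)
qed

lemma cos_ge_one_minus_square_half: "1 - x\<^sup>2 / 2 \<le> cos (x::real)"
proof -
  have "(sin (x/2))\<^sup>2 \<le> (x/2)\<^sup>2"
    using abs_sin_x_le_abs_x[of "x/2"] by (metis abs_ge_zero power2_abs power_mono)
  then show ?thesis
    using cos_double_sin[of "x/2"] by (simp add: power_divide)
qed

lemma mult_one_minus_less_cos: "x * (1 - x) < cos (x::real)"
proof -
  have "x * (1 - x) = 1 - x\<^sup>2 / 2 - ((1 - x)\<^sup>2 + 1) / 2"
    by (simp add: power2_eq_square algebra_simps divide_simps)
  also have "\<dots> < 1 - x\<^sup>2 / 2"
    by (simp add: add_nonneg_pos)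
  also have "\<dots> \<le> cos x"
    by (rule cos_ge_one_minus_square_half)
  finally show ?thesis .
qed

lemma cos_one_pos: "0 < cos (1::real)"
  using cos_gt_zero[of 1] pi_gt3 by simp

lemma sin_sinh_less_cos_cosh:
  fixes x y :: real
  assumes "x\<^sup>2 + y\<^sup>2 < 1"
  shows "y * sin x * sinh y < (1 + x) * cos x * cosh y"
proof -
  have "x\<^sup>2 < 1"
    using assms zero_le_power2[of y] by linarith
  then have x: "\<bar>x\<bar> < 1"
    by (simp add: abs_square_less_1)
  have cosh: "1 \<le> cosh y"
    by (rule cosh_real_ge_1)
  have "0 < cos \<bar>x\<bar>"
    using x pi_gt3 by (intro cos_gt_zero_pi) auto
  then have pos: "0 < (1 + x) * cos x * cosh y"
    using x cosh by auto
  have y_sinh: "0 \<le> y * sinh y"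
    by (cases "y \<ge> 0") (auto intro: mult_nonpos_nonpos)
  have rearrange: "y * sin x * sinh y = sin x * (y * sinh y)"
    by simp
  show ?thesis
  proof (cases "x \<le> 0")
    case True
    have "0 \<le> sin (- x)"
      using True x pi_gt3 by (intro sin_ge_zero) auto
    then have "y * sin x * sinh y \<le> 0"
      using y_sinh by (simp add: rearrange mult_nonpos_nonneg)
    then show ?thesis
      using pos by linarith
  next
    case False
    have sin: "0 \<le> sin x" "sin x \<le> x"
      using False x pi_gt3 sin_x_le_x[of x] by (auto intro: sin_ge_zero)
    have "y * sinh y \<le> (1 - x\<^sup>2) * cosh y"
      using mult_sinh_le_square_cosh[of y] mult_right_mono[of "y\<^sup>2" "1 - x\<^sup>2" "cosh y"] cosh assms
      by linarith
    then have "y * sin x * sinh y \<le> sin x * ((1 - x\<^sup>2) * cosh y)"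
      unfolding rearrange using sin by (intro mult_left_mono) auto
    also have "\<dots> = (1 + x) * cosh y * (sin x * (1 - x))"
      by (simp add: algebra_simps power2_eq_square)
    also have "\<dots> \<le> (1 + x) * cosh y * (x * (1 - x))"
      using x cosh sin by (intro mult_left_mono mult_right_mono) auto
    also have "\<dots> < (1 + x) * cosh y * cos x"
      using x cosh mult_one_minus_less_cos[of x] by (intro mult_strict_left_mono) auto
    finally show ?thesis
      by (simp add: algebra_simps)
  qed
qed

lemma Re_cos_cosh: "Re (cos w) = cos (Re w) * cosh (Im w)"
  by (simp add: Re_cos cosh_field_def)

lemma Im_cos_sinh: "Im (cos w) = - (sin (Re w) * sinh (Im w))"
  by (simp add: Im_cos sinh_field_def field_simps)

lemma cos_nonzero_in_unit_disk: "norm (w::complex) < 1 \<Longrightarrow> cos w \<noteq> 0"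
  using cos_eq_zero_imp_norm_ge[of w] pi_gt3 by auto

definition phi_nc :: "complex \<Rightarrow> complex" where
  "phi_nc w = (1 + w) / cos w"

lemma phi_nc_holomorphic: "phi_nc holomorphic_on unit_disk"
  unfolding phi_nc_def unit_disk_def
  by (intro holomorphic_intros) (auto simp: cos_nonzero_in_unit_disk)

lemma Re_phi_nc_pos:
  assumes "norm w < 1"
  shows "0 < Re (phi_nc w)"
proof -
  have "(Re w)\<^sup>2 + (Im w)\<^sup>2 < 1"
    using assms by (simp add: cmod_def)
  then have "0 < (1 + Re w) * cos (Re w) * cosh (Im w) - Im w * sin (Re w) * sinh (Im w)"
    using sin_sinh_less_cos_cosh by simp
  moreover have "0 < (Re (cos w))\<^sup>2 + (Im (cos w))\<^sup>2"
    using cos_nonzero_in_unit_disk[OF assms] by (simp add: sum_power2_gt_zero_iff complex_eq_iff)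
  ultimately show ?thesis
    by (simp add: phi_nc_def Re_divide Re_cos_cosh Im_cos_sinh algebra_simps)
qed

lemma Re_phi_nc_less:
  assumes "norm w < 1"
  shows "Re (phi_nc w) < 2 / cos 1"
proof -
  have "\<bar>Re w\<bar> < 1"
    using abs_Re_le_cmod[of w] assms by linarith
  then have "cos 1 \<le> cos \<bar>Re w\<bar>"
    using pi_gt3 by (intro cos_monotone_0_pi_le) auto
  also have "\<dots> \<le> cos (Re w) * cosh (Im w)"
    using cosh_real_ge_1[of "Im w"] cos_one_pos calculation by (simp add: mult_le_cancel_left1)
  also have "\<dots> \<le> norm (cos w)"
    using abs_Re_le_cmod[of "cos w"] by (simp add: Re_cos_cosh)
  finally have cos: "cos 1 \<le> norm (cos w)" .
  have "Re (phi_nc w) \<le> norm (1 + w) / norm (cos w)"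
    using complex_Re_le_cmod[of "phi_nc w"] by (simp add: phi_nc_def norm_divide)
  also have "\<dots> \<le> norm (1 + w) / cos 1"
    using cos cos_one_pos by (intro divide_left_mono mult_pos_pos) auto
  also have "\<dots> < 2 / cos 1"
    using norm_triangle_ineq[of 1 w] assms cos_one_pos by (intro divide_strict_right_mono) auto
  finally show ?thesis .
qed

lemma phi_nc_of_real: "phi_nc (of_real r) = of_real ((1 + r) / cos r)"
  by (simp add: phi_nc_def cos_of_real)

lemma subordinate_refl: "g holomorphic_on unit_disk \<Longrightarrow> subordinate g g"
  unfolding subordinate_def by (intro conjI exI[of _ "\<lambda>z. z"]) auto

lemma subordinate_image_subset:
  assumes "subordinate p g"
  shows "p ` unit_disk \<subseteq> g ` unit_disk"
  using assms unfolding subordinate_def by blast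

text \<open>The function is \<open>f z = z exp (\<integral>\<^sub>0\<^sup>z (p w - 1) / w dw)\<close>.\<close>

lemma classA_with_zfq:
  assumes holo: "p holomorphic_on unit_disk" and p0: "p 0 = 1"
  obtains f where "f \<in> classA" "\<And>z. z \<in> unit_disk \<Longrightarrow> zfq f z = p z"
proof -
  define q where "q = (\<lambda>z. if z = 0 then deriv p 0 else (p z - p 0) / (z - 0))"
  have disk: "open unit_disk" "convex unit_disk" "0 \<in> unit_disk"
    by (auto simp: unit_disk_def)
  have "q holomorphic_on unit_disk"
    unfolding q_def by (rule pole_lemma[OF holo]) (simp add: disk interior_open)
  then obtain h where "\<And>z. z \<in> unit_disk \<Longrightarrow> (h has_field_derivative q z) (at z within unit_disk)"
    using holomorphic_convex_primitive'[OF disk(2,1)] by blast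
  then have h: "(h has_field_derivative q z) (at z)" if "z \<in> unit_disk" for z
    using that at_within_open[OF that disk(1)] by metis
  define f where "f = (\<lambda>z. z * exp (h z - h 0))"
  have f': "(f has_field_derivative exp (h z - h 0) * (1 + z * q z)) (at z)"
    if "z \<in> unit_disk" for z
    unfolding f_def by (rule derivative_eq_intros h[OF that] refl | simp add: algebra_simps)+
  have "f holomorphic_on unit_disk"
    using f' disk(1) holomorphic_on_open by blast
  moreover have "deriv f 0 = 1"
    using DERIV_imp_deriv[OF f'[OF disk(3)]] by simp
  ultimately have "f \<in> classA"
    by (simp add: classA_def f_def)
  moreover have "zfq f z = p z" if "z \<in> unit_disk" for z
  proof (cases "z = 0")
    case False
    then have "1 + z * q z = p z"
      by (simp add: q_def p0)
    then show ?thesis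
      using False DERIV_imp_deriv[OF f'[OF that]] by (simp add: zfq_def f_def)
  qed (simp add: zfq_def p0)
  ultimately show ?thesis
    using that by blast
qed

lemma zfq_in_phi_nc_image:
  assumes "f \<in> S_nc" "z \<in> unit_disk"
  shows "\<exists>w. norm w < 1 \<and> zfq f z = phi_nc w"
  using subordinate_image_subset[of "zfq f" phi_nc] assms
  by (fastforce simp: S_nc_def phi_nc_def[abs_def] unit_disk_def)

lemma S_nc_subset_S_star: "S_nc \<subseteq> S_star"
  using zfq_in_phi_nc_image Re_phi_nc_pos by (fastforce simp: S_star_def S_nc_def)

lemma S_nc_subset_mu_class:
  assumes "2 / cos 1 \<le> \<beta>"
  shows "S_nc \<subseteq> mu_class \<beta>"
  using zfq_in_phi_nc_image Re_phi_nc_less assms by (fastforce simp: mu_class_def S_nc_def)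

lemma phi_nc_extremal:
  obtains f where "f \<in> S_nc" "\<And>z. z \<in> unit_disk \<Longrightarrow> zfq f z = phi_nc z"
proof -
  obtain f where f: "f \<in> classA" and zfq: "\<And>z. z \<in> unit_disk \<Longrightarrow> zfq f z = phi_nc z"
    using classA_with_zfq[OF phi_nc_holomorphic] by (auto simp: phi_nc_def)
  have "zfq f holomorphic_on unit_disk"
    using phi_nc_holomorphic zfq holomorphic_cong by metis
  then have "subordinate (zfq f) phi_nc"
    using subordinate_refl[OF phi_nc_holomorphic] zfq by (simp add: subordinate_def)
  then show ?thesis
    using that f zfq by (simp add: S_nc_def phi_nc_def[abs_def])
qed

lemma S_nc_not_subset_S_star_alpha:
  assumes "0 < \<alpha>"
  shows "\<not> S_nc \<subseteq> S_star_alpha \<alpha>"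
proof
  assume "S_nc \<subseteq> S_star_alpha \<alpha>"
  moreover obtain f where "f \<in> S_nc" and zfq: "\<And>z. z \<in> unit_disk \<Longrightarrow> zfq f z = phi_nc z"
    using phi_nc_extremal by blast
  ultimately have "f \<in> S_star_alpha \<alpha>"
    by blast
  define r where "r = 1 - min \<alpha> 1 * cos 1 / 2"
  have r: "0 < r" "r < 1"
    using assms cos_one_pos cos_le_one[of 1] mult_left_le[of "cos 1" "min \<alpha> 1"]
    by (auto simp: r_def)
  then have "cos 1 \<le> cos r"
    using pi_gt3 by (intro cos_monotone_0_pi_le) auto
  have "- of_real r \<in> unit_disk"
    using r by (simp add: unit_disk_def)
  then have "\<alpha> < Re (zfq f (- of_real r))"
    using \<open>f \<in> S_star_alpha \<alpha>\<close> by (simp add: S_star_alpha_def)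
  also have "\<dots> = (1 - r) / cos r"
    using zfq[OF \<open>- of_real r \<in> unit_disk\<close>] phi_nc_of_real[of "- r"] by simp
  also have "\<dots> \<le> (1 - r) / cos 1"
    using r \<open>cos 1 \<le> cos r\<close> cos_one_pos by (intro divide_left_mono) auto
  also have "\<dots> \<le> \<alpha> / 2"
    using cos_one_pos by (simp add: r_def)
  finally show False
    using assms by simp
qed

theorem mainTheorem8:
  shows "S_nc \<subseteq> S_star \<and>
         (\<forall>\<alpha>::real. 0 < \<alpha> \<and> \<alpha> < 1 \<longrightarrow> \<not> (S_nc \<subseteq> S_star_alpha \<alpha>)) \<and>
         (\<forall>\<beta>::real. \<beta> \<ge> 2 / cos 1 \<longrightarrow> S_nc \<subseteq> mu_class \<beta>)"
  using S_nc_subset_S_star S_nc_not_subset_S_star_alpha S_nc_subset_mu_class by blast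

end
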